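(* Let $A\in\mathbb{R}^{m\times n}$ with $\operatorname{rk}(A)=m$ and $b\in\mathbb{R}^m$, and let $x$ be a basic (not necessarily nonnegative) solution of $Ax=b$, i.e. $Ax=b$ and $x_{[n]\setminus B}=\mathbb{0}$ for some $B\subseteq[n]$ such that the columns of $A_B$ form a basis. Then for every $z\in\mathbb{R}^n$ with $Az=b$, $\|x\|_\infty\le\kappa_A\|z\|_1$.
   Context: An elementary vector of $\ker(A)$ is a nonzero $g\in\ker(A)$ with inclusion-minimal support among nonzero vectors of $\ker(A)$. The circuit imbalance is $\kappa_A=\max\{|g_i|/|g_j|: g \text{ elementary},\ i,j\in\mathrm{supp}(g)\}$. *)

theory Defs
  imports "HOL-Analysis.Analysis"
begin

definition ker_mat :: "real^'n^'m \<Rightarrow> (real^'n) set" where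
  "ker_mat A = {g. A *v g = 0}"

definition supp_vec :: "real^'n \<Rightarrow> 'n set" where
  "supp_vec g = {i. g $ i \<noteq> 0}"

definition elementary :: "real^'n^'m \<Rightarrow> real^'n \<Rightarrow> bool" where
  "elementary A g \<longleftrightarrow> g \<in> ker_mat A \<and> g \<noteq> 0 \<and>
     (\<forall>h \<in> ker_mat A. h \<noteq> 0 \<longrightarrow> \<not> (supp_vec h \<subset> supp_vec g))"

text \<open>Circuit imbalance measure. Ratios with i = j equal 1, so adding 1 to the
  set only matters when there are no elementary vectors (ker A = 0), where we
  use the convention kappa = 1.\<close>
definition circuit_imbalance :: "real^'n^'m \<Rightarrow> real" where
  "circuit_imbalance A = Sup ({1} \<union>
     {\<bar>g $ i\<bar> / \<bar>g $ j\<bar> | g i j. elementary A g \<and> i \<in> supp_vec g \<and> j \<in> supp_vec g})"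

definition norm_inf :: "real^'n \<Rightarrow> real" where
  "norm_inf x = Max (range (\<lambda>i. \<bar>x $ i\<bar>))"

definition norm_one :: "real^'n \<Rightarrow> real" where
  "norm_one x = (\<Sum>i\<in>UNIV. \<bar>x $ i\<bar>)"

definition basic_solution :: "real^'n^'m \<Rightarrow> real^'m \<Rightarrow> real^'n \<Rightarrow> bool" where
  "basic_solution A b x \<longleftrightarrow> A *v x = b \<and>
     (\<exists>B. inj_on (\<lambda>j. column j A) B \<and>
          independent ((\<lambda>j. column j A) ` B) \<and>
          span ((\<lambda>j. column j A) ` B) = UNIV \<and>
          (\<forall>j. j \<notin> B \<longrightarrow> x $ j = 0))"

end

theory Submission
  imports Defs
begin

text \<open>For j outside the basis B, the fundamental circuit g^j (the kernel vector with
  g^j_j = 1 supported in B \<union> {j}) is elementary, because every kernel vector supported in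
  B \<union> {j} is a multiple of it; so its entries are bounded by kappa_A.  Subtracting
  z_j g^j from z for all j outside B leaves a solution supported in B, which must be x.
  Hence each x_k is z_k minus a combination of the z_j with coefficients of absolute
  value at most kappa_A, and kappa_A \<ge> 1.\<close>

definition column_basis :: "real^'n^'m \<Rightarrow> 'n set \<Rightarrow> bool" where
  "column_basis A B \<longleftrightarrow> inj_on (\<lambda>j. column j A) B \<and>
     independent ((\<lambda>j. column j A) ` B) \<and> span ((\<lambda>j. column j A) ` B) = UNIV"

definition fundamental_circuit :: "real^'n^'m \<Rightarrow> 'n set \<Rightarrow> 'n \<Rightarrow> real^'n \<Rightarrow> bool" where
  "fundamental_circuit A B j g \<longleftrightarrow> A *v g = 0 \<and> g $ j = 1 \<and> supp_vec g \<subseteq> insert j B"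

lemma basic_solution_iff_column_basis:
  "basic_solution A b x \<longleftrightarrow> A *v x = b \<and> (\<exists>B. column_basis A B \<and> supp_vec x \<subseteq> B)"
  by (auto simp: basic_solution_def column_basis_def supp_vec_def)

lemma matrix_vector_mult_supp_subset:
  assumes "supp_vec w \<subseteq> B"
  shows "A *v w = (\<Sum>i\<in>B. w $ i *\<^sub>R column i A)"
proof -
  have "A *v w = (\<Sum>i\<in>UNIV. w $ i *\<^sub>R column i A)"
    by (simp add: matrix_mult_sum scalar_mult_eq_scaleR)
  also have "\<dots> = (\<Sum>i\<in>B. w $ i *\<^sub>R column i A)"
    by (rule sum.mono_neutral_right) (use assms in \<open>auto simp: supp_vec_def\<close>)
  finally show ?thesis .
qed

lemma column_basis_solvable:
  fixes A :: "real^'n^'m"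
  assumes "column_basis A B"
  obtains w where "supp_vec w \<subseteq> B" and "A *v w = y"
proof -
  have inj: "inj_on (\<lambda>j. column j A) B"
    using assms by (simp add: column_basis_def)
  have "y \<in> span ((\<lambda>j. column j A) ` B)"
    using assms by (simp add: column_basis_def)
  then obtain u where y: "y = (\<Sum>v\<in>(\<lambda>j. column j A) ` B. u v *\<^sub>R v)"
    by (auto simp: span_finite)
  define w :: "real^'n" where "w = (\<chi> i. if i \<in> B then u (column i A) else 0)"
  have supp: "supp_vec w \<subseteq> B"
    by (auto simp: w_def supp_vec_def)
  have "A *v w = (\<Sum>i\<in>B. u (column i A) *\<^sub>R column i A)"
    using matrix_vector_mult_supp_subset[OF supp] by (simp add: w_def)
  also have "\<dots> = y"
    by (simp add: y sum.reindex[OF inj])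
  finally show ?thesis
    by (rule that[OF supp])
qed

lemma column_basis_kernel_eq_0:
  fixes A :: "real^'n^'m"
  assumes "column_basis A B" and "A *v h = 0" and "supp_vec h \<subseteq> B"
  shows "h = 0"
proof -
  have inj: "inj_on (\<lambda>j. column j A) B"
    and ind: "independent ((\<lambda>j. column j A) ` B)"
    using assms(1) by (simp_all add: column_basis_def)
  define u where "u v = h $ the_inv_into B (\<lambda>j. column j A) v" for v
  have "(\<Sum>v\<in>(\<lambda>j. column j A) ` B. u v *\<^sub>R v) = (\<Sum>i\<in>B. h $ i *\<^sub>R column i A)"
    by (simp add: sum.reindex[OF inj] u_def the_inv_into_f_f[OF inj])
  also have "\<dots> = 0"
    using assms(2,3) by (simp add: matrix_vector_mult_supp_subset)
  finally have "\<forall>i\<in>B. h $ i = 0"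
    using ind by (auto simp: independent_explicit u_def the_inv_into_f_f[OF inj])
  then show "h = 0"
    using assms(3) by (auto simp: vec_eq_iff supp_vec_def)
qed

lemma column_basis_fundamental_circuit_exists:
  fixes A :: "real^'n^'m"
  assumes "column_basis A B" and "j \<notin> B"
  shows "\<exists>g. fundamental_circuit A B j g"
proof -
  obtain w where w: "supp_vec w \<subseteq> B" "A *v w = column j A"
    using column_basis_solvable[OF assms(1)] by metis
  have "A *v (axis j 1 - w) = 0"
    by (simp add: matrix_vector_mult_diff_distrib matrix_vector_mult_basis w(2))
  then have "fundamental_circuit A B j (axis j 1 - w)"
    using w(1) assms(2) by (auto simp: fundamental_circuit_def supp_vec_def axis_def)
  then show ?thesis ..
qed

lemma fundamental_circuit_kernel_multiple:
  fixes A :: "real^'n^'m"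
  assumes "column_basis A B" and g: "fundamental_circuit A B j g"
    and h: "A *v h = 0" "supp_vec h \<subseteq> insert j B"
  shows "h = h $ j *s g"
proof -
  have "A *v (h - h $ j *s g) = 0"
    using g h by (simp add: fundamental_circuit_def matrix_vector_mult_diff_distrib vec.scale)
  moreover have "supp_vec (h - h $ j *s g) \<subseteq> B"
  proof
    fix i assume "i \<in> supp_vec (h - h $ j *s g)"
    then have "i \<noteq> j" and "i \<in> supp_vec h \<or> i \<in> supp_vec g"
      using g by (auto simp: fundamental_circuit_def supp_vec_def)
    then show "i \<in> B"
      using g h(2) by (auto simp: fundamental_circuit_def)
  qed
  ultimately have "h - h $ j *s g = 0"
    by (rule column_basis_kernel_eq_0[OF assms(1)])
  then show ?thesis by simp
qed

lemma fundamental_circuit_elementary: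
  fixes A :: "real^'n^'m"
  assumes "column_basis A B" and g: "fundamental_circuit A B j g"
  shows "elementary A g"
  unfolding elementary_def
proof (intro conjI ballI impI)
  show "g \<in> ker_mat A" "g \<noteq> 0"
    using g by (auto simp: fundamental_circuit_def ker_mat_def)
  fix h assume h: "h \<in> ker_mat A" "h \<noteq> 0"
  show "\<not> supp_vec h \<subset> supp_vec g"
  proof
    assume sub: "supp_vec h \<subset> supp_vec g"
    then have "supp_vec h \<subseteq> insert j B"
      using g by (auto simp: fundamental_circuit_def)
    then have hg: "h = h $ j *s g"
      using h(1) by (intro fundamental_circuit_kernel_multiple[OF assms]) (auto simp: ker_mat_def)
    with h(2) have "h $ j \<noteq> 0"
      by (metis scalar_mult_eq_scaleR scale_zero_left)
    then have "supp_vec (h $ j *s g) = supp_vec g"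
      by (simp add: supp_vec_def)
    then have "supp_vec h = supp_vec g"
      by (simp only: hg[symmetric])
    with sub show False by simp
  qed
qed

definition circuit_ratios :: "real^'n^'m \<Rightarrow> real set" where
  "circuit_ratios A = {\<bar>g $ i\<bar> / \<bar>g $ j\<bar> | g i j.
     elementary A g \<and> i \<in> supp_vec g \<and> j \<in> supp_vec g}"

lemma circuit_imbalance_eq_Sup_circuit_ratios:
  "circuit_imbalance A = Sup ({1} \<union> circuit_ratios A)"
  by (simp add: circuit_imbalance_def circuit_ratios_def)

lemma elementary_same_supp_proportional:
  fixes A :: "real^'n^'m"
  assumes g: "elementary A g" and g': "elementary A g'" and supp: "supp_vec g = supp_vec g'"
  obtains c where "g' = c *s g"
proof -
  obtain i where gi: "g $ i \<noteq> 0"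
    using g by (metis elementary_def vec_eq_iff zero_index)
  define h where "h = g' $ i *s g - g $ i *s g'"
  have "h \<in> ker_mat A"
    using g g' by (simp add: h_def elementary_def ker_mat_def matrix_vector_mult_diff_distrib vec.scale)
  moreover have "supp_vec h \<subset> supp_vec g"
  proof -
    have "g' $ k = 0" if "g $ k = 0" for k
      using supp that unfolding supp_vec_def by blast
    then have "supp_vec h \<subseteq> supp_vec g"
      by (auto simp: h_def supp_vec_def)
    moreover have "i \<in> supp_vec g - supp_vec h"
      using gi by (simp add: h_def supp_vec_def)
    ultimately show ?thesis by blast
  qed
  ultimately have "h = 0"
    using g unfolding elementary_def by blast
  then have "g' $ i * g $ k = g $ i * g' $ k" for k
    by (metis h_def right_minus_eq vector_minus_component vector_smult_component zero_index)
  then have "g' = (g' $ i / g $ i) *s g"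
    using gi by (simp add: vec_eq_iff field_simps)
  then show ?thesis by (rule that)
qed

text \<open>The ratios of an elementary vector are invariant under scaling, so by
  proportionality they depend only on its support, of which there are finitely many.\<close>
lemma finite_circuit_ratios:
  fixes A :: "real^'n^'m"
  shows "finite (circuit_ratios A)"
proof -
  define rep where "rep S = (SOME g. elementary A g \<and> supp_vec g = S)" for S
  have "circuit_ratios A \<subseteq> (\<lambda>(S, i, j). \<bar>rep S $ i\<bar> / \<bar>rep S $ j\<bar>) ` UNIV"
  proof
    fix r assume "r \<in> circuit_ratios A"
    then obtain g i j where r: "r = \<bar>g $ i\<bar> / \<bar>g $ j\<bar>" and g: "elementary A g"
      by (auto simp: circuit_ratios_def)
    have rep: "elementary A (rep (supp_vec g)) \<and> supp_vec (rep (supp_vec g)) = supp_vec g"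
      unfolding rep_def by (rule someI[where x = g]) (simp add: g)
    then obtain c where c: "rep (supp_vec g) = c *s g"
      using elementary_same_supp_proportional g by metis
    moreover have "c \<noteq> 0"
      using c rep by (auto simp: elementary_def)
    ultimately have "r = \<bar>rep (supp_vec g) $ i\<bar> / \<bar>rep (supp_vec g) $ j\<bar>"
      by (simp add: r abs_mult)
    then show "r \<in> (\<lambda>(S, i, j). \<bar>rep S $ i\<bar> / \<bar>rep S $ j\<bar>) ` UNIV"
      by (intro image_eqI[of _ _ "(supp_vec g, i, j)"]) auto
  qed
  then show ?thesis
    by (rule finite_subset) simp
qed

lemma one_le_circuit_imbalance: "1 \<le> circuit_imbalance A"
  unfolding circuit_imbalance_eq_Sup_circuit_ratios
  by (rule cSup_upper) (simp_all add: finite_circuit_ratios)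

lemma elementary_abs_le_circuit_imbalance:
  assumes "elementary A g" and "g $ j \<noteq> 0"
  shows "\<bar>g $ k\<bar> \<le> circuit_imbalance A * \<bar>g $ j\<bar>"
proof (cases "g $ k = 0")
  case True
  then show ?thesis
    using one_le_circuit_imbalance[of A] by simp
next
  case False
  then have "\<bar>g $ k\<bar> / \<bar>g $ j\<bar> \<in> circuit_ratios A"
    using assms unfolding circuit_ratios_def supp_vec_def by blast
  then have "\<bar>g $ k\<bar> / \<bar>g $ j\<bar> \<le> circuit_imbalance A"
    unfolding circuit_imbalance_eq_Sup_circuit_ratios
    by (intro cSup_upper) (simp_all add: finite_circuit_ratios)
  then show ?thesis
    using assms(2) by (simp add: divide_le_eq)
qed

lemma fundamental_circuit_abs_le_circuit_imbalance:
  fixes A :: "real^'n^'m"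
  assumes "column_basis A B" and "fundamental_circuit A B j g"
  shows "\<bar>g $ k\<bar> \<le> circuit_imbalance A"
  using elementary_abs_le_circuit_imbalance[OF fundamental_circuit_elementary[OF assms], of j k]
    assms(2) by (simp add: fundamental_circuit_def)

lemma column_basis_solution_eq_reduction:
  fixes A :: "real^'n^'m"
  assumes "column_basis A B" and G: "\<And>j. j \<notin> B \<Longrightarrow> fundamental_circuit A B j (G j)"
    and x: "A *v x = A *v z" "supp_vec x \<subseteq> B"
  shows "x = z - (\<Sum>j\<in>-B. z $ j *s G j)"
proof -
  define y where "y = z - (\<Sum>j\<in>-B. z $ j *s G j)"
  have "A *v y = A *v z"
    using G by (simp add: y_def fundamental_circuit_def matrix_vector_mult_diff_distrib vec.sum vec.scale)
  moreover have "supp_vec y \<subseteq> B"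
  proof
    fix i assume "i \<in> supp_vec y"
    show "i \<in> B"
    proof (rule ccontr)
      assume i: "i \<notin> B"
      have "(\<Sum>j\<in>-B. z $ j * G j $ i) = (\<Sum>j\<in>-B. if j = i then z $ i else 0)"
        by (rule sum.cong) (use G i in \<open>auto simp: fundamental_circuit_def supp_vec_def\<close>)
      with i \<open>i \<in> supp_vec y\<close> show False
        by (simp add: y_def supp_vec_def)
    qed
  qed
  moreover have "supp_vec (x - y) \<subseteq> supp_vec x \<union> supp_vec y"
    by (auto simp: supp_vec_def)
  ultimately have "x - y = 0"
    using x by (intro column_basis_kernel_eq_0[OF assms(1)])
      (auto simp: matrix_vector_mult_diff_distrib)
  then show ?thesis
    by (simp add: y_def)
qed

lemma abs_sub_sum_le_norm_one:
  fixes z :: "real^'n" and c :: "'n \<Rightarrow> real"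
  assumes "1 \<le> K" and "k \<notin> J" and "\<And>j. j \<in> J \<Longrightarrow> \<bar>c j\<bar> \<le> K"
  shows "\<bar>z $ k - (\<Sum>j\<in>J. z $ j * c j)\<bar> \<le> K * norm_one z"
proof -
  have "\<bar>z $ k - (\<Sum>j\<in>J. z $ j * c j)\<bar> \<le> \<bar>z $ k\<bar> + (\<Sum>j\<in>J. \<bar>z $ j\<bar> * \<bar>c j\<bar>)"
    using sum_abs[of "\<lambda>j. z $ j * c j" J] by (simp add: abs_mult)
  also have "\<dots> \<le> K * \<bar>z $ k\<bar> + (\<Sum>j\<in>J. K * \<bar>z $ j\<bar>)"
    using assms by (intro add_mono sum_mono)
      (auto simp: mult.commute mult_le_cancel_right1 intro: mult_right_mono)
  also have "\<dots> = K * (\<Sum>j\<in>insert k J. \<bar>z $ j\<bar>)"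
    using assms(2) by (simp add: sum_distrib_left distrib_left)
  also have "\<dots> \<le> K * norm_one z"
    unfolding norm_one_def using assms(1) by (intro mult_left_mono sum_mono2) auto
  finally show ?thesis .
qed

theorem corollary2p8:
  fixes A :: "real^'n^'m" and b :: "real^'m" and x z :: "real^'n"
  assumes "rank A = CARD('m)"
    and "basic_solution A b x"
    and "A *v z = b"
  shows "norm_inf x \<le> circuit_imbalance A * norm_one z"
proof -
  obtain B where B: "column_basis A B" and x: "A *v x = A *v z" "supp_vec x \<subseteq> B"
    using assms(2,3) by (auto simp: basic_solution_iff_column_basis)
  obtain G where G: "\<And>j. j \<notin> B \<Longrightarrow> fundamental_circuit A B j (G j)"
    using column_basis_fundamental_circuit_exists[OF B] by metis
  have x_eq: "x = z - (\<Sum>j\<in>-B. z $ j *s G j)"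
    using B G x by (rule column_basis_solution_eq_reduction)
  have "\<bar>x $ k\<bar> \<le> circuit_imbalance A * norm_one z" for k
  proof (cases "k \<in> B")
    case True
    then have "\<bar>z $ k - (\<Sum>j\<in>-B. z $ j * G j $ k)\<bar> \<le> circuit_imbalance A * norm_one z"
      using fundamental_circuit_abs_le_circuit_imbalance[OF B G]
      by (intro abs_sub_sum_le_norm_one one_le_circuit_imbalance) auto
    then show ?thesis
      by (subst x_eq) simp
  next
    case False
    with x(2) have "x $ k = 0"
      by (auto simp: supp_vec_def)
    then show ?thesis
      using one_le_circuit_imbalance[of A] by (simp add: norm_one_def sum_nonneg)
  qed
  then show ?thesis
    unfolding norm_inf_def by (intro Max.boundedI) auto
qed

end
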